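(* Let $b>1$ be an integer, let $H$ be a generalized $b$-happy function with digit mean $\mu$ and digit standard deviation $\sigma$, and let $C\subseteq\mathbb{N}$. Assume there is a positive integer $n_1$ satisfying bound (B): (B1) $4\left(1+3\mu+\sqrt{2}\,\sigma\, b^{5n_1/8}\right)\le b^{n_1-1}$, (B2) $\sqrt{3\mu b}\,\sigma\le b^{3n_1/8}$, (B3) $4\mu\left(3\mu+1+b^{3n_1/4}+2\sigma\mu^{-1/2}b^{5n_1/8}\right)\le b^{n_1-1}$, and an $n_1$-strict interval $I_1$ with type-$C$ density $d_1$. Then for every $N\in\mathbb{N}$ there exist an integer $n>N$ and an $n$-strict interval $I$ whose type-$C$ density is at least $$d_1\exp\!\left(-\frac{2}{b^{n_1/4}-1}-\frac{4\sigma}{\sqrt{\mu}\,\left(b^{n_1/8}-1\right)}\right).$$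
   Context: A generalized $b$-happy function: fix an integer $b>1$ and non-negative integers $h(0),\dots,h(b-1)$ with $h(0)=0$, $h(1)=1$; for $n=\sum_{i=0}^k a_ib^i$ in base $b$, $H(n)=\sum_{i=0}^k h(a_i)$. Digit mean $\mu=\frac1b\sum_{j=0}^{b-1}h(j)$, digit variance $\sigma^2=\frac1b\sum_{j=0}^{b-1}(h(j)-\mu)^2$. An integer $n$ is type-$C$ if $H^k(n)\in C$ for some integer $k\ge0$. An integer interval $[a,c]$ is the set of integers $x$ with $a\le x\le c$; $|I|$ is its cardinality. The type-$C$ density of a finite nonempty integer interval $I$ is $|\{n\in I:n\text{ type-}C\}|/|I|$. For a positive integer $m$, an integer interval $I$ is $m$-strict if $I\subseteq[b^{m-1},b^m-1]$ and $|I|=b^{3m/4}$. *)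

theory Defs
  imports Complex_Main
begin

definition gen_happy_digits :: "nat \<Rightarrow> (nat \<Rightarrow> nat) \<Rightarrow> bool" where
  "gen_happy_digits b h \<longleftrightarrow> b > 1 \<and> h 0 = 0 \<and> h 1 = 1"

function happyH :: "nat \<Rightarrow> (nat \<Rightarrow> nat) \<Rightarrow> nat \<Rightarrow> nat" where
  "happyH b h n = (if b \<le> 1 \<or> n = 0 then 0 else h (n mod b) + happyH b h (n div b))"
  by pat_completeness auto
termination by (relation "measure (\<lambda>(b,h,n). n)") auto

declare happyH.simps [simp del]

definition digit_mean :: "nat \<Rightarrow> (nat \<Rightarrow> nat) \<Rightarrow> real" where
  "digit_mean b h = (\<Sum>j<b. real (h j)) / real b"

definition digit_sd :: "nat \<Rightarrow> (nat \<Rightarrow> nat) \<Rightarrow> real" where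
  "digit_sd b h = sqrt ((\<Sum>j<b. (real (h j) - digit_mean b h)^2) / real b)"

definition typeC :: "nat \<Rightarrow> (nat \<Rightarrow> nat) \<Rightarrow> nat set \<Rightarrow> nat \<Rightarrow> bool" where
  "typeC b h C n \<longleftrightarrow> (\<exists>k. (happyH b h ^^ k) n \<in> C)"

definition typeC_density :: "nat \<Rightarrow> (nat \<Rightarrow> nat) \<Rightarrow> nat set \<Rightarrow> nat set \<Rightarrow> real" where
  "typeC_density b h C I = real (card {n \<in> I. typeC b h C n}) / real (card I)"

definition strict_interval :: "nat \<Rightarrow> nat \<Rightarrow> nat set \<Rightarrow> bool" where
  "strict_interval b m I \<longleftrightarrow> (\<exists>a c. I = {a..c}) \<and> I \<subseteq> {b^(m-1)..b^m - 1}
      \<and> real (card I) = real b powr (3 * real m / 4)"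

end

theory Submission
  imports Defs
begin

text \<open>Let \<open>J = [a, a + L)\<close> be an \<open>m\<close>-strict interval of type-\<open>C\<close> density \<open>d\<close>. For
  \<open>s < b^k\<close> the digit sum is additive, \<open>H (t b^k + s) = H t + H s\<close>, and a number is of type \<open>C\<close>
  as soon as its image under \<open>H\<close> is. By Chebyshev's inequality all but a fraction
  \<open>k \<sigma>\<^sup>2 / r\<^sup>2\<close> of the suffixes \<open>s < b^k\<close> have \<open>H s\<close> within \<open>r\<close> of \<open>k \<mu>\<close>. Take
  \<open>k = 3q\<close> with \<open>k \<mu>\<close> just below \<open>a - r\<close>, and \<open>q\<close>-digit prefixes \<open>t\<^sub>j\<close> whose digit sums
  sweep a window of width \<open>R \<le> L + 2r\<close>; double counting shows that one of the \<open>4q\<close>-strict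
  blocks \<open>[t\<^sub>j b^k, (t\<^sub>j + 1) b^k)\<close> has density at least \<open>d (1 - b^(-m/4)) L / R\<close>.
  Conditions (B1) and (B3) make room for this construction and persist as \<open>m\<close> grows, so the
  step can be iterated with \<open>m\<close> at least doubling; the density losses then add up to
  geometric series in \<open>b^(-m/4)\<close> and \<open>b^(-m/8)\<close>.\<close>

lemma happyH_0 [simp]: "happyH b h 0 = 0"
  by (simp add: happyH.simps)

lemma happyH_append_digit:
  assumes "b > 1" "h 0 = 0" "d < b"
  shows "happyH b h (n * b + d) = h d + happyH b h n"
proof (cases "n * b + d = 0")
  case True
  then show ?thesis using assms by simp
next
  case False
  then show ?thesis
    using assms by (subst happyH.simps) simp
qed

lemma happyH_concat:
  assumes "b > 1" "h 0 = 0" "s < b ^ p"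
  shows "happyH b h (t * b ^ p + s) = happyH b h t + happyH b h s"
  using assms(3)
proof (induction p arbitrary: s)
  case (Suc p)
  have digit: "s mod b < b" and rest: "s div b < b ^ p"
    using assms(1) Suc.prems by (simp_all add: less_mult_imp_div_less mult.commute)
  have "t * b ^ Suc p + s = (t * b ^ p + s div b) * b + s mod b"
    by (simp add: algebra_simps)
  then have "happyH b h (t * b ^ Suc p + s) = h (s mod b) + happyH b h (t * b ^ p + s div b)"
    using happyH_append_digit[of b h, OF assms(1,2) digit] by simp
  also have "\<dots> = happyH b h t + (h (s mod b) + happyH b h (s div b))"
    using Suc.IH[OF rest] by simp
  also have "h (s mod b) + happyH b h (s div b) = happyH b h s"
    using happyH_append_digit[of b h, OF assms(1,2) digit, of "s div b"] by simp
  finally show ?case .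
qed simp

fun repunit :: "nat \<Rightarrow> nat \<Rightarrow> nat" where
  "repunit b 0 = 0"
| "repunit b (Suc j) = repunit b j * b + 1"

lemma happyH_repunit:
  assumes "b > 1" "h 0 = 0" "h 1 = 1"
  shows "happyH b h (repunit b j) = j"
proof (induction j)
  case (Suc j)
  then show ?case
    using happyH_append_digit[of b h 1 "repunit b j"] assms by simp
qed simp

lemma repunit_less_power:
  assumes "b > 1"
  shows "repunit b j < b ^ j"
proof (induction j)
  case (Suc j)
  then have "repunit b j * b + 1 < (repunit b j + 1) * b"
    using assms by (simp add: algebra_simps)
  also have "\<dots> \<le> b ^ j * b"
    using Suc by (intro mult_le_mono1) simp
  finally show ?case by (simp add: mult.commute)
qed simp

lemma exists_q_digit_number_with_happyH:
  assumes "b > 1" "h 0 = 0" "h 1 = 1" "1 \<le> w" "w \<le> q"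
  shows "\<exists>t. happyH b h t = w \<and> b ^ (q - 1) \<le> t \<and> t < b ^ q"
proof -
  have small: "repunit b (w - 1) < b ^ (q - 1)"
    using repunit_less_power[OF assms(1)] power_increasing[of "w - 1" "q - 1" b] assms
    by (meson diff_le_mono less_le_trans nat_less_le zero_less_diff)
  define t where "t = 1 * b ^ (q - 1) + repunit b (w - 1)"
  have "happyH b h t = happyH b h 1 + (w - 1)"
    unfolding t_def using happyH_concat[of b h, OF assms(1,2) small] happyH_repunit[of b h, OF assms(1-3)]
    by (simp only:)
  moreover have "happyH b h 1 = 1"
    using happyH_append_digit[of b h 1 0] assms by simp
  moreover have "t < 2 * b ^ (q - 1)"
    using small unfolding t_def by simp
  moreover have "2 * b ^ (q - 1) \<le> b ^ q"
  proof -
    have "2 * b ^ (q - 1) \<le> b * b ^ (q - 1)"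
      using assms(1) by simp
    then show ?thesis
      using assms(4,5) by (simp add: power_eq_if)
  qed
  ultimately show ?thesis
    using assms(4) by (intro exI[of _ t]) (auto simp: t_def)
qed

lemma typeC_happyH:
  assumes "typeC b h C (happyH b h x)"
  shows "typeC b h C x"
proof -
  obtain k where "(happyH b h ^^ k) (happyH b h x) \<in> C"
    using assms unfolding typeC_def by blast
  then have "(happyH b h ^^ Suc k) x \<in> C"
    by (simp add: funpow_Suc_right del: funpow.simps)
  then show ?thesis unfolding typeC_def by blast
qed

lemma sum_lessThan_mult_by_digits:
  fixes f :: "nat \<Rightarrow> 'a::comm_monoid_add"
  shows "(\<Sum>s<N * b. f s) = (\<Sum>n<N. \<Sum>d<b. f (n * b + d))"
proof -
  have "(\<Sum>s<N * b. f s) = (\<Sum>n<N. \<Sum>s\<in>{n * b..<n * b + b}. f s)"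
    by (rule sum.nat_group[symmetric])
  also have "\<dots> = (\<Sum>n<N. \<Sum>d<b. f (n * b + d))"
    by (rule sum.cong[OF refl]) (simp add: sum.atLeastLessThan_shift_0 atLeast0LessThan comp_def)
  finally show ?thesis .
qed

lemma card_gt_mult_sq_le_sum_sq:
  fixes f :: "'a \<Rightarrow> real"
  assumes "finite A" "0 \<le> \<delta>"
  shows "real (card {x\<in>A. \<delta> < \<bar>f x\<bar>}) * \<delta>^2 \<le> (\<Sum>x\<in>A. (f x)^2)"
proof -
  have "real (card {x\<in>A. \<delta> < \<bar>f x\<bar>}) * \<delta>^2 = (\<Sum>x\<in>{x\<in>A. \<delta> < \<bar>f x\<bar>}. \<delta>^2)"
    by simp
  also have "\<dots> \<le> (\<Sum>x\<in>{x\<in>A. \<delta> < \<bar>f x\<bar>}. (f x)^2)"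
  proof (rule sum_mono)
    fix x assume "x \<in> {x\<in>A. \<delta> < \<bar>f x\<bar>}"
    then have "\<delta>^2 \<le> \<bar>f x\<bar>^2"
      using assms(2) by (intro power_mono) auto
    then show "\<delta>^2 \<le> (f x)^2"
      by simp
  qed
  also have "\<dots> \<le> (\<Sum>x\<in>A. (f x)^2)"
    using assms(1) by (intro sum_mono2) auto
  finally show ?thesis .
qed

context
  fixes b :: nat and h :: "nat \<Rightarrow> nat"
  assumes happy: "gen_happy_digits b h"
begin

private lemma b_gt_1: "b > 1" and h_0: "h 0 = 0" and h_1: "h 1 = 1"
  using happy unfolding gen_happy_digits_def by auto

lemma digit_mean_mult_base_ge_1: "1 \<le> digit_mean b h * real b"
proof -
  have "real (h 1) \<le> (\<Sum>j<b. real (h j))"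
    using b_gt_1 by (intro member_le_sum) auto
  then show ?thesis
    using b_gt_1 h_1 by (simp add: digit_mean_def)
qed

lemma digit_mean_pos: "digit_mean b h > 0"
  using digit_mean_mult_base_ge_1 b_gt_1 by (smt (verit) mult_nonpos_nonneg of_nat_0_le_iff)

lemma sum_digit_deviation: "(\<Sum>d<b. real (h d) - digit_mean b h) = 0"
  using b_gt_1 by (simp add: sum_subtractf digit_mean_def)

lemma sum_sq_digit_deviation:
  "(\<Sum>d<b. (real (h d) - digit_mean b h)^2) = real b * (digit_sd b h)^2"
  using b_gt_1 by (simp add: digit_sd_def sum_nonneg)

lemma digit_sd_pos: "digit_sd b h > 0"
proof -
  let ?\<mu> = "digit_mean b h"
  have "(\<Sum>j\<in>{0,1}. (real (h j) - ?\<mu>)^2) \<le> (\<Sum>j<b. (real (h j) - ?\<mu>)^2)"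
    using b_gt_1 by (intro sum_mono2) auto
  moreover have "(\<Sum>j\<in>{0,1}. (real (h j) - ?\<mu>)^2) = ?\<mu>^2 + (1 - ?\<mu>)^2"
    using h_0 h_1 by simp
  moreover have "?\<mu>^2 + (1 - ?\<mu>)^2 > 0"
    using digit_mean_pos by (simp add: add_pos_nonneg)
  ultimately show ?thesis
    using b_gt_1 by (simp add: digit_sd_def)
qed

text \<open>Over the numbers with at most \<open>k\<close> digits, the digits are independent and uniformly
  distributed, so the variance of \<open>happyH\<close> is \<open>k\<close> times the digit variance.\<close>
lemma sum_sq_deviation_happyH:
  "(\<Sum>s<b^k. (real (happyH b h s) - real k * digit_mean b h)^2)
     = real b ^ k * real k * (digit_sd b h)^2"
proof (induction k)
  case (Suc k)
  let ?\<mu> = "digit_mean b h" and ?\<sigma> = "digit_sd b h"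
  define X where "X s = real (happyH b h s) - real k * ?\<mu>" for s
  have expand: "(real (happyH b h (s * b + d)) - real (Suc k) * ?\<mu>)^2
      = (real (h d) - ?\<mu>)^2 + 2 * X s * (real (h d) - ?\<mu>) + (X s)^2" if "d < b" for s d
    using happyH_append_digit[of b h d s] that b_gt_1 h_0
    by (simp add: X_def power2_eq_square algebra_simps)
  have "(\<Sum>s<b^Suc k. (real (happyH b h s) - real (Suc k) * ?\<mu>)^2)
      = (\<Sum>s<b^k. \<Sum>d<b. (real (happyH b h (s * b + d)) - real (Suc k) * ?\<mu>)^2)"
    by (simp only: power_Suc2 sum_lessThan_mult_by_digits)
  also have "\<dots> = (\<Sum>s<b^k. \<Sum>d<b. (real (h d) - ?\<mu>)^2 + 2 * X s * (real (h d) - ?\<mu>) + (X s)^2)"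
    by (intro sum.cong refl expand) simp
  also have "\<dots> = (\<Sum>s<b^k. real b * ?\<sigma>^2 + real b * (X s)^2)"
    by (simp add: sum.distrib sum_distrib_left[symmetric] sum_digit_deviation
        sum_sq_digit_deviation)
  also have "\<dots> = real b ^ Suc k * real (Suc k) * ?\<sigma>^2"
    using Suc by (simp add: sum.distrib sum_distrib_left[symmetric] X_def algebra_simps)
  finally show ?case .
qed simp

lemma card_happyH_near_mean:
  assumes "\<delta> > 0"
  shows "real b ^ k * (1 - real k * (digit_sd b h)^2 / \<delta>^2)
    \<le> real (card {s. s < b^k \<and> \<bar>real (happyH b h s) - real k * digit_mean b h\<bar> \<le> \<delta>})"
proof -
  define D where "D s = real (happyH b h s) - real k * digit_mean b h" for s
  let ?near = "{s. s < b^k \<and> \<bar>D s\<bar> \<le> \<delta>}" and ?far = "{s\<in>{..<b^k}. \<delta> < \<bar>D s\<bar>}"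
  have "card ?near + card ?far = card (?near \<union> ?far)"
    by (rule card_Un_disjoint[symmetric]) auto
  also have "?near \<union> ?far = {..<b^k}"
    by auto
  also have "card {..<b^k} = b^k"
    by simp
  finally have "real (card ?near) + real (card ?far) = real b ^ k"
    by (simp flip: of_nat_add)
  moreover have "real (card ?far) * \<delta>^2 \<le> real b ^ k * real k * (digit_sd b h)^2"
    using card_gt_mult_sq_le_sum_sq[of "{..<b^k}" \<delta> D] assms sum_sq_deviation_happyH
    by (simp add: D_def)
  then have "real (card ?far) \<le> real b ^ k * (real k * (digit_sd b h)^2 / \<delta>^2)"
    using assms by (simp add: divide_simps)
  moreover have "real b ^ k * (1 - real k * (digit_sd b h)^2 / \<delta>^2)
      = real b ^ k - real b ^ k * (real k * (digit_sd b h)^2 / \<delta>^2)"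
    by (simp add: right_diff_distrib)
  ultimately show ?thesis
    unfolding D_def by linarith
qed

end

lemma card_mult_card_le_sum_shifts:
  fixes f :: "'a \<Rightarrow> nat"
  assumes G: "G \<subseteq> {a..<a + L}" and Z: "finite Z" "\<forall>s\<in>Z. V \<le> f s \<and> f s \<le> U"
    and "U \<le> a"
  shows "card G * card Z \<le> (\<Sum>j < L + U - V. card {s\<in>Z. a - U + j + f s \<in> G})"
proof -
  let ?R = "L + U - V"
  have fiber: "card G \<le> card {j\<in>{..<?R}. a - U + j + f s \<in> G}" if "s \<in> Z" for s
  proof (rule card_inj_on_le)
    have low: "a - U + f s \<le> y" and high: "y - (a - U + f s) < ?R" if "y \<in> G" for y
      using G Z(2) \<open>s \<in> Z\<close> \<open>U \<le> a\<close> that by force+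
    show "inj_on (\<lambda>y. y - (a - U + f s)) G"
    proof (rule inj_onI)
      fix y y' assume "y \<in> G" "y' \<in> G" "y - (a - U + f s) = y' - (a - U + f s)"
      then show "y = y'"
        using low[of y] low[of y'] by simp
    qed
    show "(\<lambda>y. y - (a - U + f s)) ` G \<subseteq> {j\<in>{..<?R}. a - U + j + f s \<in> G}"
    proof (rule image_subsetI)
      fix y assume "y \<in> G"
      then have "a - U + (y - (a - U + f s)) + f s = y"
        using low[OF \<open>y \<in> G\<close>] by arith
      then show "y - (a - U + f s) \<in> {j\<in>{..<?R}. a - U + j + f s \<in> G}"
        using high \<open>y \<in> G\<close> by simp
    qed
  qed simp
  have "card G * card Z = (\<Sum>s\<in>Z. card G)"
    by simp
  also have "\<dots> \<le> (\<Sum>s\<in>Z. \<Sum>j<?R. if a - U + j + f s \<in> G then 1 else 0)"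
    using fiber by (intro sum_mono) (simp add: sum.If_cases Int_def)
  also have "\<dots> = (\<Sum>j<?R. \<Sum>s\<in>Z. if a - U + j + f s \<in> G then 1 else 0)"
    by (rule sum.swap)
  also have "\<dots> = (\<Sum>j<?R. card {s\<in>Z. a - U + j + f s \<in> G})"
    using Z(1) by (simp add: sum.If_cases Int_def)
  finally show ?thesis .
qed

lemma exists_ge_average:
  fixes c :: "nat \<Rightarrow> nat"
  assumes "X \<le> (\<Sum>j<R. c j)" "R > 0"
  shows "\<exists>j<R. X \<le> R * c j"
proof (rule ccontr)
  assume "\<not> ?thesis"
  then have "(\<Sum>j<R. R * c j) < (\<Sum>j<R. X)"
    using assms(2) by (intro sum_strict_mono) auto
  then have "R * (\<Sum>j<R. c j) < R * X"
    by (simp add: sum_distrib_left)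
  then show False
    using assms(1) mult_le_mono2 not_less by blast
qed

lemma card_typeC_block_ge:
  assumes happy: "gen_happy_digits b h" and G: "\<forall>y\<in>G. typeC b h C y"
  shows "card {s. s < b^k \<and> happyH b h t + happyH b h s \<in> G}
    \<le> card {x \<in> {t * b^k..<t * b^k + b^k}. typeC b h C x}"
proof (rule card_inj_on_le[of "\<lambda>s. t * b^k + s"])
  have "b > 1" "h 0 = 0"
    using happy unfolding gen_happy_digits_def by auto
  then have "happyH b h (t * b^k + s) = happyH b h t + happyH b h s" if "s < b^k" for s
    using happyH_concat[of b h s k t] that by simp
  then show "(\<lambda>s. t * b^k + s) ` {s. s < b^k \<and> happyH b h t + happyH b h s \<in> G}
      \<subseteq> {x \<in> {t * b^k..<t * b^k + b^k}. typeC b h C x}"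
    using G typeC_happyH by auto
qed (simp_all add: inj_on_def)

text \<open>The prefixes \<open>t\<^sub>j\<close>, of digit sum \<open>a - U + j\<close>, shift the digit sums of the suffixes
  (which lie in \<open>[V, U]\<close>) across \<open>[a, a + L)\<close>; averaging over \<open>j\<close> picks the best block.\<close>
lemma exists_block_dense:
  fixes q k a L U V :: nat
  assumes happy: "gen_happy_digits b h"
    and G: "G \<subseteq> {a..<a + L}" "\<forall>y\<in>G. typeC b h C y"
    and "L > 0" "V \<le> U" "U < a" "a + L \<le> q + V"
  shows "\<exists>t. b^(q-1) \<le> t \<and> t < b^q \<and>
    card G * card {s. s < b^k \<and> V \<le> happyH b h s \<and> happyH b h s \<le> U}
      \<le> (L + U - V) * card {x \<in> {t * b^k..<t * b^k + b^k}. typeC b h C x}"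
proof -
  let ?R = "L + U - V" and ?Z = "{s. s < b^k \<and> V \<le> happyH b h s \<and> happyH b h s \<le> U}"
  have "\<forall>j<?R. \<exists>t. happyH b h t = a - U + j \<and> b^(q-1) \<le> t \<and> t < b^q"
  proof (intro allI impI)
    fix j assume "j < ?R"
    then show "\<exists>t. happyH b h t = a - U + j \<and> b^(q-1) \<le> t \<and> t < b^q"
      using happy assms(6,7) unfolding gen_happy_digits_def
      by (intro exists_q_digit_number_with_happyH) auto
  qed
  then obtain t where t: "\<forall>j<?R. happyH b h (t j) = a - U + j \<and> b^(q-1) \<le> t j \<and> t j < b^q"
    unfolding choice_iff' by blast
  let ?block = "\<lambda>j. card {x \<in> {t j * b^k..<t j * b^k + b^k}. typeC b h C x}"
  have "card G * card ?Z \<le> (\<Sum>j<?R. card {s\<in>?Z. a - U + j + happyH b h s \<in> G})"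
    using assms(5,6) by (intro card_mult_card_le_sum_shifts[OF G(1)]) auto
  also have "\<dots> \<le> (\<Sum>j<?R. ?block j)"
  proof (rule sum_mono)
    fix j assume "j \<in> {..<?R}"
    then have "happyH b h (t j) = a - U + j"
      using t by simp
    then have "card {s\<in>?Z. a - U + j + happyH b h s \<in> G}
        \<le> card {s. s < b^k \<and> happyH b h (t j) + happyH b h s \<in> G}"
      by (intro card_mono) auto
    also have "\<dots> \<le> ?block j"
      by (rule card_typeC_block_ge[OF happy G(2)])
    finally show "card {s\<in>?Z. a - U + j + happyH b h s \<in> G} \<le> ?block j" .
  qed
  finally have "card G * card ?Z \<le> (\<Sum>j<?R. ?block j)" .
  moreover have "?R > 0"
    using assms(4,5) by simp
  ultimately obtain j where "j < ?R" "card G * card ?Z \<le> ?R * ?block j"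
    using exists_ge_average by blast
  then show ?thesis
    using t by blast
qed

lemma exp_minus_two_mult_le_one_minus:
  fixes x :: real
  assumes "0 \<le> x" "x \<le> 1/2"
  shows "exp (- 2 * x) \<le> 1 - x"
proof -
  have "0 \<le> x * (1 - 2 * x)"
    using assms by simp
  then have "1 \<le> (1 - x) * (1 + 2 * x)"
    by (simp add: algebra_simps)
  also have "\<dots> \<le> (1 - x) * exp (2 * x)"
    using assms exp_ge_add_one_self[of "2 * x"] by (intro mult_left_mono) auto
  finally show ?thesis
    by (simp add: exp_minus field_simps)
qed

lemma exp_minus_le_inverse_one_plus:
  fixes x :: real
  assumes "0 \<le> x"
  shows "exp (- x) \<le> 1 / (1 + x)"
  using assms exp_ge_add_one_self[of x] by (simp add: exp_minus field_simps)

lemma sub_mult_sqrt_mono: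
  fixes K B x c :: real
  assumes "0 \<le> K" "K \<le> B - c * sqrt B" "0 < B" "B \<le> x"
  shows "K \<le> x - c * sqrt x"
proof -
  have "0 \<le> sqrt B * (sqrt B - c)"
    using assms(1,2,3) by (simp add: algebra_simps)
  then have "c \<le> sqrt B"
    using assms(3) by (simp add: zero_le_mult_iff)
  moreover have "sqrt B \<le> sqrt x"
    using assms(4) by simp
  moreover have "0 \<le> sqrt x"
    using assms(3,4) by simp
  ultimately have "0 \<le> (sqrt x - sqrt B) * (sqrt x + sqrt B - c)"
    by (intro mult_nonneg_nonneg) linarith+
  then have "B - c * sqrt B \<le> x - c * sqrt x"
    using assms(3,4) by (simp add: algebra_simps)
  then show ?thesis
    using assms(2) by linarith
qed

lemma exists_nat_mult_within:
  fixes \<mu> X Y :: real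
  assumes "\<mu> > 0" "0 \<le> Y" "\<mu> * (Y + 1) \<le> X"
  obtains q :: nat where "real q * \<mu> \<le> X" "X - \<mu> < real q * \<mu>" "Y < real q"
proof
  let ?x = "X / \<mu>"
  have x: "Y + 1 \<le> ?x"
    using assms by (simp add: le_divide_eq mult.commute)
  define q where "q = nat \<lfloor>?x\<rfloor>"
  have q: "real q = of_int \<lfloor>?x\<rfloor>"
    using x assms(2) unfolding q_def by simp
  have "real q \<le> ?x" "?x < real q + 1"
    using q by linarith+
  then show "real q * \<mu> \<le> X" "X - \<mu> < real q * \<mu>"
    using assms(1) by (simp_all add: pos_le_divide_eq pos_divide_less_eq algebra_simps)
  show "Y < real q"
    using q x by linarith
qed

text \<open>Conditions (B1) and (B3) of the theorem.\<close>
definition admissible :: "nat \<Rightarrow> real \<Rightarrow> real \<Rightarrow> nat \<Rightarrow> bool" where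
  "admissible b \<mu> \<sigma> m \<longleftrightarrow>
     4 * (1 + 3 * \<mu> + sqrt 2 * \<sigma> * real b powr (5 * real m / 8)) \<le> real b ^ (m - 1) \<and>
     4 * \<mu> * (3 * \<mu> + 1 + real b powr (3 * real m / 4)
       + 2 * \<sigma> * (1 / sqrt \<mu>) * real b powr (5 * real m / 8)) \<le> real b ^ (m - 1)"

lemma admissible_room_below:
  fixes b m :: nat and \<mu> \<sigma> x :: real
  defines "r \<equiv> \<sigma> * real b powr (real m / 8) / sqrt \<mu> * sqrt x"
  assumes b: "b > 1" and m: "m > 0" and \<mu>: "\<mu> > 0" "1 \<le> \<mu> * real b" and \<sigma>: "\<sigma> \<ge> 0"
    and x: "real b ^ (m - 1) \<le> x"
    and adm: "admissible b \<mu> \<sigma> m"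
  shows "3 * \<mu> * (real b powr (3 * real m / 4) + 2 + 2 * r + 3 * \<mu>) \<le> x - 1 - r"
proof -
  note B1 = adm[unfolded admissible_def, THEN conjunct1]
    and B3 = adm[unfolded admissible_def, THEN conjunct2]
  define B where "B = real b ^ (m - 1)"
  define s where "s = \<sigma> * real b powr (real m / 8) / sqrt \<mu>"
  define L where "L = real b powr (3 * real m / 4)"
  define Q where "Q = \<sigma> / sqrt \<mu> * real b powr (5 * real m / 8)"
  have B_pos: "B > 0"
    using b unfolding B_def by simp
  have sB_nonneg: "s * sqrt B \<ge> 0"
    using \<mu> \<sigma> B_pos unfolding s_def by simp
  have "real b powr (5 * real m / 8) = real b powr (real m / 8) * real b powr (real m / 2)"
    by (simp flip: powr_add)
  also have "real b powr (real m / 2) = sqrt B * sqrt (real b)"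
    using b m by (simp add: B_def powr_half_sqrt_powr powr_realpow real_sqrt_mult[symmetric]
        flip: power_Suc2)
  finally have Q_eq: "Q = s * sqrt B * sqrt (real b)"
    unfolding Q_def s_def by simp
  have "s * sqrt B \<le> Q"
    unfolding Q_eq using b sB_nonneg by (simp add: mult_le_cancel_left1)
  then have Q_ge: "\<mu> * (s * sqrt B) \<le> \<mu> * Q"
    using \<mu> by simp
  have "sqrt 2 * \<sigma> * real b powr (5 * real m / 8) = sqrt (2 * \<mu> * real b) * (s * sqrt B)"
    using \<mu> Q_eq unfolding Q_def by (simp add: real_sqrt_mult field_simps)
  moreover have "1 \<le> sqrt (2 * \<mu> * real b)"
    using \<mu> by simp
  ultimately have P_ge: "s * sqrt B \<le> sqrt 2 * \<sigma> * real b powr (5 * real m / 8)"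
    using sB_nonneg by (simp add: mult_le_cancel_right1)
  have B3': "4 * \<mu> * (3 * \<mu> + 1 + L + 2 * Q) \<le> B"
    using B3 unfolding L_def Q_def B_def by (simp add: mult.assoc)
  \<comment> \<open>a quarter of (B1) plus three quarters of (B3)\<close>
  let ?K = "1 + 6 * \<mu> + 9 * \<mu>^2 + 3 * \<mu> * L"
  have "?K \<le> B - ((1 + 6 * \<mu>) * s) * sqrt B"
    using B1 B3' P_ge Q_ge unfolding B_def by (simp add: algebra_simps power2_eq_square)
  moreover have "0 \<le> ?K"
    using \<mu> by (simp add: L_def)
  ultimately have "?K \<le> x - ((1 + 6 * \<mu>) * s) * sqrt x"
    using sub_mult_sqrt_mono B_pos x unfolding B_def by blast
  then show ?thesis
    unfolding r_def s_def[symmetric] L_def[symmetric] by (simp add: algebra_simps power2_eq_square)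
qed

lemma powr_le_mult_power:
  fixes b c :: real
  assumes "b \<ge> 1" "0 \<le> c" "c \<le> 1" "m \<le> m'"
  shows "b powr (c * real m') \<le> b powr (c * real m) * b ^ (m' - m)"
proof -
  have "b powr (c * real m') = b powr (c * real m) * b powr (c * real (m' - m))"
    using assms(4) by (simp add: of_nat_diff algebra_simps flip: powr_add)
  moreover have "b powr (c * real (m' - m)) \<le> b powr real (m' - m)"
    using assms by (intro powr_mono) (auto simp: mult_left_le_one_le)
  ultimately show ?thesis
    using assms(1) by (simp add: powr_realpow)
qed

lemma add_le_add_mult:
  fixes A F X X' :: real
  assumes "0 \<le> A" "1 \<le> F" "X' \<le> X * F"
  shows "A + X' \<le> (A + X) * F"
  using assms mult_left_mono[of 1 F A] by (simp add: algebra_simps)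

lemma mult_le_mult_of_le:
  fixes c B F X X' :: real
  assumes "X' \<le> X * F" "c * X \<le> B" "0 \<le> c" "0 \<le> F"
  shows "c * X' \<le> B * F"
proof -
  have "c * X' \<le> (c * X) * F"
    using mult_left_mono[OF assms(1,3)] by (simp add: mult.assoc)
  also have "\<dots> \<le> B * F"
    using assms(2,4) by (rule mult_right_mono)
  finally show ?thesis .
qed

lemma admissible_mono:
  assumes adm: "admissible b \<mu> \<sigma> m" and "b > 1" "\<mu> > 0" "\<sigma> \<ge> 0" "1 \<le> m" "m \<le> m'"
  shows "admissible b \<mu> \<sigma> m'"
proof -
  define F where "F = real b ^ (m' - m)"
  have F: "1 \<le> F"
    using assms(2) unfolding F_def by simp
  have grow: "real b powr (c * real m') \<le> real b powr (c * real m) * F" if "0 \<le> c" "c \<le> 1" for c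
    using powr_le_mult_power[of "real b" c m m'] assms(2,6) that unfolding F_def by simp
  have P5: "real b powr (5 * real m' / 8) \<le> real b powr (5 * real m / 8) * F"
    and P3: "real b powr (3 * real m' / 4) \<le> real b powr (3 * real m / 4) * F"
    using grow[of "5/8"] grow[of "3/4"] by simp_all
  have pow: "real b ^ (m' - 1) = real b ^ (m - 1) * F"
    using assms(5,6) unfolding F_def by (simp flip: power_add)
  have "sqrt 2 * \<sigma> * real b powr (5 * real m' / 8) \<le> sqrt 2 * \<sigma> * real b powr (5 * real m / 8) * F"
    using mult_left_mono[OF P5, of "sqrt 2 * \<sigma>"] assms(4) by (simp add: mult.assoc)
  then have grow1: "1 + 3 * \<mu> + sqrt 2 * \<sigma> * real b powr (5 * real m' / 8)
      \<le> (1 + 3 * \<mu> + sqrt 2 * \<sigma> * real b powr (5 * real m / 8)) * F"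
    using add_le_add_mult[OF _ F] assms(3) by (simp add: add.assoc)
  have "2 * \<sigma> * (1 / sqrt \<mu>) * real b powr (5 * real m' / 8)
      \<le> 2 * \<sigma> * (1 / sqrt \<mu>) * real b powr (5 * real m / 8) * F"
    using mult_left_mono[OF P5, of "2 * \<sigma> * (1 / sqrt \<mu>)"] assms(3,4) by (simp add: mult.assoc)
  then have "real b powr (3 * real m' / 4) + 2 * \<sigma> * (1 / sqrt \<mu>) * real b powr (5 * real m' / 8)
      \<le> (real b powr (3 * real m / 4) + 2 * \<sigma> * (1 / sqrt \<mu>) * real b powr (5 * real m / 8)) * F"
    using P3 unfolding distrib_right by linarith
  then have "(3 * \<mu> + 1) + (real b powr (3 * real m' / 4)
        + 2 * \<sigma> * (1 / sqrt \<mu>) * real b powr (5 * real m' / 8))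
      \<le> ((3 * \<mu> + 1) + (real b powr (3 * real m / 4)
        + 2 * \<sigma> * (1 / sqrt \<mu>) * real b powr (5 * real m / 8))) * F"
    using assms(3) by (intro add_le_add_mult[OF _ F]) simp_all
  then have grow3: "3 * \<mu> + 1 + real b powr (3 * real m' / 4) + 2 * \<sigma> * (1 / sqrt \<mu>) * real b powr (5 * real m' / 8)
      \<le> (3 * \<mu> + 1 + real b powr (3 * real m / 4)
          + 2 * \<sigma> * (1 / sqrt \<mu>) * real b powr (5 * real m / 8)) * F"
    by (simp only: add.assoc)
  have "4 * (1 + 3 * \<mu> + sqrt 2 * \<sigma> * real b powr (5 * real m' / 8)) \<le> real b ^ (m - 1) * F"
    using adm F unfolding admissible_def by (intro mult_le_mult_of_le[OF grow1]) auto
  moreover have "4 * \<mu> * (3 * \<mu> + 1 + real b powr (3 * real m' / 4)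
      + 2 * \<sigma> * (1 / sqrt \<mu>) * real b powr (5 * real m' / 8)) \<le> real b ^ (m - 1) * F"
    using adm F assms(3) unfolding admissible_def by (intro mult_le_mult_of_le[OF grow3]) auto
  ultimately show ?thesis
    unfolding admissible_def pow by blast
qed

lemma strict_intervalE:
  assumes "strict_interval b m I" "b > 1"
  obtains a L where "I = {a..<a + L}" "b^(m-1) \<le> a" "a + L \<le> b^m" "card I = L" "L > 0"
    "real L = real b powr (3 * real m / 4)"
proof -
  obtain a c where I: "I = {a..c}" and sub: "I \<subseteq> {b^(m-1)..b^m - 1}"
    and card: "real (card I) = real b powr (3 * real m / 4)"
    using assms(1) unfolding strict_interval_def by blast
  have "real (card I) > 0"
    using card assms(2) by simp
  then have "a \<le> c"
    using I by simp
  define L where "L = c + 1 - a"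
  have facts: "I = {a..<a + L}" "card I = L" "L > 0"
    using I \<open>a \<le> c\<close> by (auto simp: L_def)
  have "b^(m-1) \<le> a" "c \<le> b^m - 1"
    using sub I \<open>a \<le> c\<close> by auto
  moreover have "b^m \<ge> 1"
    using assms(2) by simp
  ultimately have bounds: "b^(m-1) \<le> a" "a + L \<le> b^m"
    using \<open>a \<le> c\<close> unfolding L_def by linarith+
  show ?thesis
    by (rule that[of a L, OF facts(1) bounds facts(2,3)]) (use facts(2) card in simp)
qed

lemma strict_interval_block:
  assumes "b > 1" "b^(q-1) \<le> t" "t < b^q"
  shows "strict_interval b (4 * q) {t * b^(3*q)..<t * b^(3*q) + b^(3*q)}"
proof -
  let ?k = "3 * q"
  have "q \<ge> 1"
    using assms(2,3) by (cases q) auto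
  have "b^(4*q - 1) = b^(q-1) * b^?k"
    using \<open>q \<ge> 1\<close> by (simp flip: power_add)
  also have "\<dots> \<le> t * b^?k"
    using assms(2) by simp
  finally have low: "b^(4*q - 1) \<le> t * b^?k" .
  have "t * b^?k + b^?k = (t + 1) * b^?k"
    by simp
  also have "\<dots> \<le> b^q * b^?k"
    using assms(3) by (intro mult_le_mono1) simp
  also have "\<dots> = b^(4*q)"
    by (simp flip: power_add)
  finally have high: "t * b^?k + b^?k \<le> b^(4*q)" .
  have "b^?k \<ge> 1"
    using assms(1) by simp
  then have "{t * b^?k..<t * b^?k + b^?k} = {t * b^?k..t * b^?k + b^?k - 1}"
    by auto
  moreover have "real b powr (3 * real (4 * q) / 4) = real b ^ ?k"
    using assms(1) powr_realpow[of "real b" ?k] by simp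
  ultimately show ?thesis
    unfolding strict_interval_def using low high by auto
qed

lemma half_less_base_powr:
  assumes "b \<ge> 2"
  shows "real (m div 2) < real b powr (3 * real m / 4)"
proof -
  have "real (m div 2) < 2 ^ (m div 2)"
    by (metis less_exp of_nat_less_iff of_nat_numeral of_nat_power)
  also have "\<dots> \<le> real b ^ (m div 2)"
    using assms by (intro power_mono) auto
  also have "\<dots> = real b powr real (m div 2)"
    using assms by (simp add: powr_realpow)
  also have "\<dots> \<le> real b powr (3 * real m / 4)"
    using assms by (intro powr_mono) linarith+
  finally show ?thesis .
qed

lemma card_happyH_window_ge:
  fixes k :: nat and r :: real
  assumes happy: "gen_happy_digits b h" and "r > 0"
  defines "U \<equiv> nat \<lfloor>real k * digit_mean b h + r\<rfloor>" and "V \<equiv> nat \<lceil>real k * digit_mean b h - r\<rceil>"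
  shows "real b ^ k * (1 - real k * (digit_sd b h)^2 / r^2)
    \<le> real (card {s. s < b^k \<and> V \<le> happyH b h s \<and> happyH b h s \<le> U})"
proof -
  have "{s. s < b^k \<and> \<bar>real (happyH b h s) - real k * digit_mean b h\<bar> \<le> r}
      \<subseteq> {s. s < b^k \<and> V \<le> happyH b h s \<and> happyH b h s \<le> U}"
    unfolding U_def V_def by (auto simp: le_nat_iff nat_le_iff le_floor_iff ceiling_le_iff)
  then have "card {s. s < b^k \<and> \<bar>real (happyH b h s) - real k * digit_mean b h\<bar> \<le> r}
      \<le> card {s. s < b^k \<and> V \<le> happyH b h s \<and> happyH b h s \<le> U}"
    by (intro card_mono) auto
  then show ?thesis
    using card_happyH_near_mean[OF happy \<open>r > 0\<close>, of k] by linarith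
qed

lemma admissible_quarter_powr_ge_4:
  assumes "admissible b \<mu> \<sigma> m" "b > 1" "m > 0" "\<mu> > 0" "\<sigma> \<ge> 0" "1 \<le> \<mu> * real b"
  shows "4 \<le> real b powr (real m / 4)"
proof -
  let ?L = "real b powr (3 * real m / 4)"
  have "4 * \<mu> * ?L \<le> real b ^ (m - 1)"
    using assms(1,4,5) unfolding admissible_def
    by (smt (verit) mult_left_mono mult_nonneg_nonneg powr_ge_zero real_sqrt_ge_zero
        divide_nonneg_nonneg)
  then have "4 * ?L * (\<mu> * real b) \<le> real b ^ m"
    using assms(2,3) by (simp add: algebra_simps power_eq_if split: if_splits)
  then have "4 * ?L \<le> real b ^ m"
    using assms(6) by (smt (verit) mult_le_cancel_left1 powr_ge_zero)
  also have "real b ^ m = real b powr (real m / 4) * ?L"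
    using assms(2) by (simp add: powr_realpow flip: powr_add)
  finally show ?thesis
    using assms(2) by simp
qed

lemma exp_le_fraction_happyH_window:
  fixes b m a k :: nat and h :: "nat \<Rightarrow> nat"
  defines "\<mu> \<equiv> digit_mean b h" and "\<sigma> \<equiv> digit_sd b h"
  defines "r \<equiv> \<sigma> * real b powr (real m / 8) / sqrt \<mu> * sqrt (real a)"
  assumes happy: "gen_happy_digits b h" and adm: "admissible b \<mu> \<sigma> m" and "m > 0" "a > 0"
    and k: "real k * \<mu> \<le> real a"
  shows "exp (- 2 * real b powr (- real m / 4))
    \<le> real (card {s. s < b^k \<and> nat \<lceil>real k * \<mu> - r\<rceil> \<le> happyH b h s
                    \<and> happyH b h s \<le> nat \<lfloor>real k * \<mu> + r\<rfloor>}) / real b ^ k"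
proof -
  have b: "b > 1"
    using happy by (simp add: gen_happy_digits_def)
  have \<mu>: "\<mu> > 0" "1 \<le> \<mu> * real b" and \<sigma>: "\<sigma> > 0"
    using digit_mean_pos[OF happy] digit_mean_mult_base_ge_1[OF happy] digit_sd_pos[OF happy]
    by (simp_all add: \<mu>_def \<sigma>_def)
  have r_pos: "r > 0"
    unfolding r_def using \<mu> \<sigma> \<open>a > 0\<close> b by simp
  define X where "X = real b powr (real m / 4)"
  define \<beta> where "\<beta> = real b powr (- real m / 4)"
  have X: "4 \<le> X" "\<beta> = 1 / X"
    using admissible_quarter_powr_ge_4[OF adm b \<open>m > 0\<close> \<mu>(1) less_imp_le[OF \<sigma>] \<mu>(2)] b
    unfolding X_def \<beta>_def by (simp_all add: powr_minus_divide)
  have "(real b powr (real m / 8))^2 = X"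
    unfolding X_def by (simp add: power2_eq_square flip: powr_add)
  then have "r^2 = \<sigma>^2 * X / \<mu> * real a"
    unfolding r_def using \<mu> by (simp add: power_mult_distrib power_divide)
  then have "real k * \<sigma>^2 / r^2 = real k * \<mu> / (real a * X)"
    using \<mu> r_pos \<open>a > 0\<close> X by (simp add: field_simps)
  also have "\<dots> \<le> real a / (real a * X)"
    using k X by (intro divide_right_mono) auto
  also have "\<dots> = \<beta>"
    using \<open>a > 0\<close> X by simp
  finally have "exp (- 2 * \<beta>) \<le> 1 - real k * \<sigma>^2 / r^2"
    using exp_minus_two_mult_le_one_minus[of \<beta>] X by simp
  then have "exp (- 2 * \<beta>) * real b ^ k \<le> (1 - real k * \<sigma>^2 / r^2) * real b ^ k"
    by (rule mult_right_mono) simp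
  also have "\<dots> \<le> real (card {s. s < b^k \<and> nat \<lceil>real k * \<mu> - r\<rceil> \<le> happyH b h s
                    \<and> happyH b h s \<le> nat \<lfloor>real k * \<mu> + r\<rfloor>})"
    using card_happyH_window_ge[OF happy r_pos, of k] unfolding \<mu>_def \<sigma>_def
    by (simp only: mult.commute)
  finally show ?thesis
    using b unfolding \<beta>_def by (simp add: pos_le_divide_eq)
qed

lemma exp_minus_le_ratio:
  fixes L \<rho> R :: real
  assumes "0 < L" "0 \<le> \<rho>" "0 < R" "R \<le> L + 2 * \<rho>"
  shows "exp (- (2 * \<rho> / L)) \<le> L / R"
proof -
  have "exp (- (2 * \<rho> / L)) \<le> 1 / (1 + 2 * \<rho> / L)"
    using assms(1,2) by (intro exp_minus_le_inverse_one_plus) simp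
  also have "\<dots> = L / (L + 2 * \<rho>)"
    using assms(1) by (simp add: field_simps)
  also have "\<dots> \<le> L / R"
    using assms by (intro divide_left_mono) auto
  finally show ?thesis .
qed

lemma exp_le_length_ratio:
  fixes b m L U V :: nat and c :: real
  assumes "b > 1" "0 \<le> c" "V \<le> U" "real U - real V \<le> 2 * c * real b powr (5 * real m / 8)"
    and L: "real L = real b powr (3 * real m / 4)"
  shows "exp (- 2 * c * real b powr (- real m / 8)) \<le> real L / real (L + U - V)"
proof -
  have L_pos: "0 < real L"
    using L assms(1) by simp
  have R: "real (L + U - V) = real L + real U - real V"
    using assms(3) by (simp add: of_nat_diff)
  have "real b powr (- real m / 8) = real b powr (5 * real m / 8) / real L"
    unfolding L using assms(1) by (simp flip: powr_diff)
  then have "exp (- 2 * c * real b powr (- real m / 8))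
      = exp (- (2 * (c * real b powr (5 * real m / 8)) / real L))"
    by simp
  also have "\<dots> \<le> real L / real (L + U - V)"
    using L_pos R assms(2-4) by (intro exp_minus_le_ratio) auto
  finally show ?thesis .
qed

text \<open>The suffix length \<open>k = 3q\<close> is chosen so that the typical digit sum \<open>k \<mu>\<close> of a suffix lies
  just below \<open>a - r\<close>, leaving room for a prefix of digit sum at least one.\<close>
lemma exists_digit_window:
  fixes b m a L :: nat and h :: "nat \<Rightarrow> nat"
  defines "\<mu> \<equiv> digit_mean b h" and "\<sigma> \<equiv> digit_sd b h"
  assumes happy: "gen_happy_digits b h" and m: "m > 0" and adm: "admissible b \<mu> \<sigma> m"
    and a: "b^(m-1) \<le> a" "a \<le> b^m" and L: "real L = real b powr (3 * real m / 4)"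
  obtains q U V where "V \<le> U" "U < a" "a + L \<le> q + V" "2 * m \<le> 4 * q"
    "exp (- 2 * real b powr (- real m / 4))
       \<le> real (card {s. s < b^(3 * q) \<and> V \<le> happyH b h s \<and> happyH b h s \<le> U}) / real b ^ (3 * q)"
    "exp (- 2 * (\<sigma> / sqrt \<mu>) * real b powr (- real m / 8)) \<le> real L / real (L + U - V)"
proof -
  have b: "b > 1"
    using happy by (simp add: gen_happy_digits_def)
  have \<mu>: "\<mu> > 0" "1 \<le> \<mu> * real b" and \<sigma>: "\<sigma> > 0"
    using digit_mean_pos[OF happy] digit_mean_mult_base_ge_1[OF happy] digit_sd_pos[OF happy]
    by (simp_all add: \<mu>_def \<sigma>_def)
  have "0 < b^(m-1)"
    using b by simp
  then have "a > 0"
    using a(1) by linarith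
  define r where "r = \<sigma> * real b powr (real m / 8) / sqrt \<mu> * sqrt (real a)"
  have r_pos: "r > 0"
    unfolding r_def using \<mu> \<sigma> \<open>a > 0\<close> b by simp
  have "sqrt (real a) \<le> real b powr (real m / 2)"
    using a(2) b by (simp add: powr_half_sqrt_powr powr_realpow flip: of_nat_power)
  then have "r \<le> \<sigma> / sqrt \<mu> * (real b powr (real m / 8) * real b powr (real m / 2))"
    unfolding r_def using \<mu> \<sigma> by (simp add: divide_right_mono mult_left_mono)
  then have r_le: "r \<le> \<sigma> / sqrt \<mu> * real b powr (5 * real m / 8)"
    by (simp flip: powr_add)
  have room: "3 * \<mu> * (real L + 2 + 2 * r + 3 * \<mu>) \<le> real a - 1 - r"
    using admissible_room_below[OF b m \<mu> less_imp_le[OF \<sigma>] _ adm, of "real a"] a(1) L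
    unfolding r_def by simp
  obtain q :: nat where q: "real q * (3 * \<mu>) \<le> real a - 1 - r"
    "real a - 1 - r - 3 * \<mu> < real q * (3 * \<mu>)" "real L + 1 + 2 * r + 3 * \<mu> < real q"
  proof (rule exists_nat_mult_within)
    show "3 * \<mu> * (real L + 1 + 2 * r + 3 * \<mu> + 1) \<le> real a - 1 - r"
      using room by (simp add: algebra_simps)
  qed (use \<mu> r_pos in auto)
  define k where "k = 3 * q"
  define U where "U = nat \<lfloor>real k * \<mu> + r\<rfloor>"
  define V where "V = nat \<lceil>real k * \<mu> - r\<rceil>"
  let ?Z = "{s. s < b^k \<and> V \<le> happyH b h s \<and> happyH b h s \<le> U}"
  have k\<mu>: "real k * \<mu> + r \<le> real a - 1" "real a - 1 - r - 3 * \<mu> < real k * \<mu>"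
    using q unfolding k_def by (simp_all add: algebra_simps)
  have U: "real U \<le> real k * \<mu> + r" and V: "real k * \<mu> - r \<le> real V"
    unfolding U_def V_def using r_pos \<mu> by (simp_all add: of_nat_floor of_nat_ceiling)
  then have UV: "real U - real V \<le> 2 * (\<sigma> / sqrt \<mu>) * real b powr (5 * real m / 8)"
    using r_le by linarith
  have e1: "exp (- 2 * real b powr (- real m / 4)) \<le> real (card ?Z) / real b ^ k"
    using exp_le_fraction_happyH_window[OF happy adm[unfolded \<mu>_def \<sigma>_def] m \<open>a > 0\<close>, of k]
      k\<mu>(1) r_pos
    unfolding U_def V_def r_def \<mu>_def \<sigma>_def by simp
  then have "0 < real (card ?Z) / real b ^ k"
    by (meson exp_gt_zero less_le_trans)
  then have "card ?Z > 0"
    by (simp add: zero_less_divide_iff)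
  then obtain s where "s \<in> ?Z"
    by (metis card_gt_0_iff ex_in_conv)
  then have "V \<le> U"
    by simp
  moreover have "U < a"
    using U k\<mu>(1) by linarith
  moreover have "a + L \<le> q + V"
    using V k\<mu>(2) q(3) by linarith
  moreover have "real (m div 2) < real q"
    using half_less_base_powr[of b m] b q(3) L r_pos \<mu> by linarith
  then have "m div 2 < q"
    by simp
  then have "2 * m \<le> 4 * q"
    by presburger
  moreover have "exp (- 2 * (\<sigma> / sqrt \<mu>) * real b powr (- real m / 8)) \<le> real L / real (L + U - V)"
    by (rule exp_le_length_ratio[OF b _ \<open>V \<le> U\<close> UV L]) (use \<mu> \<sigma> in simp)
  ultimately show ?thesis
    using that e1 unfolding k_def by blast
qed

lemma ratio_le_of_mult_le:
  fixes g z c R N L :: nat and e1 e2 :: real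
  assumes "g * z \<le> R * c" "0 < R" "0 < N" "0 < L"
    and "0 \<le> e1" "e1 \<le> z / N" "0 \<le> e2" "e2 \<le> L / R"
  shows "g / L * (e1 * e2) \<le> c / N"
proof -
  have "g / L * (e1 * e2) \<le> g / L * (z / N * (L / R))"
    using assms(5-8) by (intro mult_left_mono mult_mono) auto
  also have "\<dots> = real (g * z) / (N * R)"
    using assms(4) by (simp add: field_simps)
  also have "\<dots> \<le> real (R * c) / (N * R)"
    using assms(1) by (intro divide_right_mono) (simp_all only: of_nat_le_iff of_nat_0_le_iff)
  also have "\<dots> = c / N"
    using assms(2) by simp
  finally show ?thesis .
qed

lemma density_step:
  fixes b m :: nat and h :: "nat \<Rightarrow> nat" and C J :: "nat set"
  defines "\<mu> \<equiv> digit_mean b h" and "\<sigma> \<equiv> digit_sd b h"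
  assumes happy: "gen_happy_digits b h" and m: "m > 0" and adm: "admissible b \<mu> \<sigma> m"
    and J: "strict_interval b m J"
  shows "\<exists>m' I. 2 * m \<le> m' \<and> strict_interval b m' I \<and>
    typeC_density b h C J
      * exp (- 2 * real b powr (- real m / 4) - 2 * (\<sigma> / sqrt \<mu>) * real b powr (- real m / 8))
      \<le> typeC_density b h C I"
proof -
  have b: "b > 1"
    using happy by (simp add: gen_happy_digits_def)
  obtain a L where J_eq: "J = {a..<a + L}" and a: "b^(m-1) \<le> a" "a + L \<le> b^m"
    and card_J: "card J = L" and "L > 0" and L: "real L = real b powr (3 * real m / 4)"
    using strict_intervalE[OF J b] by blast
  have "a \<le> b^m"
    using a(2) by simp
  then obtain q U V where window: "V \<le> U" "U < a" "a + L \<le> q + V" "2 * m \<le> 4 * q"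
    and e1: "exp (- 2 * real b powr (- real m / 4))
       \<le> real (card {s. s < b^(3 * q) \<and> V \<le> happyH b h s \<and> happyH b h s \<le> U}) / real b ^ (3 * q)"
    and e2: "exp (- 2 * (\<sigma> / sqrt \<mu>) * real b powr (- real m / 8)) \<le> real L / real (L + U - V)"
    using exists_digit_window[OF happy m adm[unfolded \<mu>_def \<sigma>_def] a(1) _ L]
    unfolding \<mu>_def \<sigma>_def by blast
  let ?G = "{y \<in> J. typeC b h C y}"
  have G: "?G \<subseteq> {a..<a + L}" "\<forall>y\<in>?G. typeC b h C y"
    using J_eq by auto
  obtain t where t: "b^(q-1) \<le> t" "t < b^q" and count:
    "card ?G * card {s. s < b^(3 * q) \<and> V \<le> happyH b h s \<and> happyH b h s \<le> U}
       \<le> (L + U - V) * card {x \<in> {t * b^(3 * q)..<t * b^(3 * q) + b^(3 * q)}. typeC b h C x}"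
    using exists_block_dense[OF happy G \<open>L > 0\<close> window(1-3), of "3 * q"] by blast
  let ?I = "{t * b^(3 * q)..<t * b^(3 * q) + b^(3 * q)}"
  have "typeC_density b h C J
      * (exp (- 2 * real b powr (- real m / 4)) * exp (- 2 * (\<sigma> / sqrt \<mu>) * real b powr (- real m / 8)))
      \<le> typeC_density b h C ?I"
    unfolding typeC_density_def card_J
    by (rule ratio_le_of_mult_le[OF count]) (use b window \<open>L > 0\<close> e1 e2 in simp_all)
  moreover have "exp (- 2 * real b powr (- real m / 4) - 2 * (\<sigma> / sqrt \<mu>) * real b powr (- real m / 8))
      = exp (- 2 * real b powr (- real m / 4)) * exp (- 2 * (\<sigma> / sqrt \<mu>) * real b powr (- real m / 8))"
    by (simp flip: exp_add)
  ultimately show ?thesis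
    using strict_interval_block[OF b t] window(4) by (intro exI[of _ "4 * q"] exI[of _ ?I]) auto
qed

lemma iterate_with_potential:
  fixes D :: "'a \<Rightarrow> real" and P :: "nat \<Rightarrow> 'a \<Rightarrow> bool" and T :: "nat \<Rightarrow> real"
  assumes step: "\<And>m J. P m J \<Longrightarrow> \<exists>m' I. m < m' \<and> P m' I \<and> D J * exp (T m' - T m) \<le> D I"
    and start: "P m0 J0" and "0 \<le> D J0"
  shows "\<exists>m>N. \<exists>I. P m I \<and> D J0 * exp (T m - T m0) \<le> D I"
proof -
  have "\<exists>m I. m0 + i \<le> m \<and> P m I \<and> D J0 * exp (T m - T m0) \<le> D I" for i
  proof (induction i)
    case 0
    show ?case
      using start by (intro exI[of _ m0] exI[of _ J0]) simp
  next
    case (Suc i)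
    then obtain m I where "m0 + i \<le> m" "P m I" and dens: "D J0 * exp (T m - T m0) \<le> D I"
      by blast
    then obtain m' I' where "m < m'" "P m' I'" and dens': "D I * exp (T m' - T m) \<le> D I'"
      using step by blast
    have "D J0 * exp (T m' - T m0) = D J0 * exp (T m - T m0) * exp (T m' - T m)"
      by (simp add: mult.assoc flip: exp_add)
    also have "\<dots> \<le> D I * exp (T m' - T m)"
      using dens by (rule mult_right_mono) simp
    also have "\<dots> \<le> D I'"
      by (fact dens')
    finally show ?case
      using \<open>m0 + i \<le> m\<close> \<open>m < m'\<close> \<open>P m' I'\<close> by (intro exI[of _ m'] exI[of _ I']) auto
  qed
  then obtain m I where "m0 + Suc N \<le> m" "P m I" "D J0 * exp (T m - T m0) \<le> D I"
    by blast
  then show ?thesis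
    by (intro exI[of _ m]) auto
qed

text \<open>\<open>geom_tail b \<alpha> d m\<close> is the sum of \<open>b powr (-(m + j d) / \<alpha>)\<close> over all \<open>j \<ge> 0\<close>.\<close>
definition geom_tail :: "nat \<Rightarrow> real \<Rightarrow> nat \<Rightarrow> nat \<Rightarrow> real" where
  "geom_tail b \<alpha> d m = real b powr (- real m / \<alpha>) / (1 - real b powr (- real d / \<alpha>))"

lemma geom_tail_nonneg:
  assumes "b > 1" "\<alpha> > 0" "d > 0"
  shows "geom_tail b \<alpha> d m \<ge> 0"
proof -
  have "real b powr (- real d / \<alpha>) < 1"
    using assms by (intro powr_less_one) (auto simp: divide_neg_pos)
  then show ?thesis
    unfolding geom_tail_def by simp
qed

lemma geom_tail_step:
  assumes "b > 1" "\<alpha> > 0" "d > 0" "m + d \<le> m'"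
  shows "real b powr (- real m / \<alpha>) + geom_tail b \<alpha> d m' \<le> geom_tail b \<alpha> d m"
proof -
  define r where "r = real b powr (- real d / \<alpha>)"
  have r: "r < 1"
    unfolding r_def using assms by (intro powr_less_one) (auto simp: divide_neg_pos)
  have "(real m + real d) / \<alpha> \<le> real m' / \<alpha>"
    using assms(2,4) by (intro divide_right_mono) auto
  then have "- real m' / \<alpha> \<le> - real m / \<alpha> + - real d / \<alpha>"
    by (simp add: add_divide_distrib)
  then have "real b powr (- real m' / \<alpha>) \<le> real b powr (- real m / \<alpha>) * r"
    unfolding r_def using assms(1) by (simp flip: powr_add)
  then have "real b powr (- real m / \<alpha>) + geom_tail b \<alpha> d m'
      \<le> real b powr (- real m / \<alpha>) + real b powr (- real m / \<alpha>) * r / (1 - r)"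
    unfolding geom_tail_def r_def[symmetric] using r by (simp add: divide_right_mono)
  also have "\<dots> = geom_tail b \<alpha> d m"
    unfolding geom_tail_def r_def[symmetric] using r by (simp add: field_simps)
  finally show ?thesis .
qed

lemma geom_tail_start:
  assumes "b > 1" "\<alpha> > 0" "d > 0"
  shows "geom_tail b \<alpha> d d = 1 / (real b powr (real d / \<alpha>) - 1)"
proof -
  have "real b powr (real d / \<alpha>) > 1"
    using assms by (intro gr_one_powr) auto
  then show ?thesis
    unfolding geom_tail_def using assms(1) by (simp add: powr_minus_divide field_simps)
qed

lemma typeC_density_nonneg: "typeC_density b h C I \<ge> 0"
  by (simp add: typeC_density_def)

lemma density_step_with_tails:
  fixes b n1 m :: nat and h :: "nat \<Rightarrow> nat" and C J :: "nat set"
  defines "\<mu> \<equiv> digit_mean b h" and "\<sigma> \<equiv> digit_sd b h"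
  defines "T \<equiv> \<lambda>m. 2 * geom_tail b 4 n1 m + 2 * (\<sigma> / sqrt \<mu>) * geom_tail b 8 n1 m"
  assumes happy: "gen_happy_digits b h" and n1: "0 < n1" "n1 \<le> m" and adm: "admissible b \<mu> \<sigma> n1"
    and J: "strict_interval b m J"
  shows "\<exists>m' I. m < m' \<and> n1 \<le> m' \<and> strict_interval b m' I \<and>
    typeC_density b h C J * exp (T m' - T m) \<le> typeC_density b h C I"
proof -
  have b: "b > 1"
    using happy by (simp add: gen_happy_digits_def)
  have \<mu>: "\<mu> > 0" and \<sigma>: "\<sigma> > 0"
    using digit_mean_pos[OF happy] digit_sd_pos[OF happy] by (simp_all add: \<mu>_def \<sigma>_def)
  have "admissible b \<mu> \<sigma> m"
    using admissible_mono[OF adm b \<mu>] \<sigma> n1 by simp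
  moreover have "m > 0"
    using n1 by simp
  ultimately obtain m' I where "2 * m \<le> m'" "strict_interval b m' I"
    and dens: "typeC_density b h C J
      * exp (- 2 * real b powr (- real m / 4) - 2 * (\<sigma> / sqrt \<mu>) * real b powr (- real m / 8))
      \<le> typeC_density b h C I"
    using density_step[OF happy _ _ J, where C = C] unfolding \<mu>_def \<sigma>_def by blast
  then have "m + n1 \<le> m'"
    using n1 by simp
  then have tail4: "real b powr (- real m / 4) + geom_tail b 4 n1 m' \<le> geom_tail b 4 n1 m"
    and tail8: "real b powr (- real m / 8) + geom_tail b 8 n1 m' \<le> geom_tail b 8 n1 m"
    using geom_tail_step[OF b _ n1(1)] by simp_all
  have "0 \<le> 2 * (\<sigma> / sqrt \<mu>)"
    using \<mu> \<sigma> by simp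
  from mult_left_mono[OF tail8 this] tail4
  have "T m' - T m
      \<le> - 2 * real b powr (- real m / 4) - 2 * (\<sigma> / sqrt \<mu>) * real b powr (- real m / 8)"
    unfolding T_def distrib_left by linarith
  then have "typeC_density b h C J * exp (T m' - T m)
      \<le> typeC_density b h C J
        * exp (- 2 * real b powr (- real m / 4) - 2 * (\<sigma> / sqrt \<mu>) * real b powr (- real m / 8))"
    by (intro mult_left_mono typeC_density_nonneg) simp
  then have "typeC_density b h C J * exp (T m' - T m) \<le> typeC_density b h C I"
    using dens by linarith
  then show ?thesis
    using \<open>strict_interval b m' I\<close> \<open>2 * m \<le> m'\<close> n1 by (intro exI[of _ m'] exI[of _ I]) auto
qed

lemma density_iteration:
  fixes b n1 :: nat and h :: "nat \<Rightarrow> nat" and C I1 :: "nat set"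
  defines "\<mu> \<equiv> digit_mean b h" and "\<sigma> \<equiv> digit_sd b h"
  defines "T \<equiv> \<lambda>m. 2 * geom_tail b 4 n1 m + 2 * (\<sigma> / sqrt \<mu>) * geom_tail b 8 n1 m"
  assumes happy: "gen_happy_digits b h" and "0 < n1" and adm: "admissible b \<mu> \<sigma> n1"
    and I1: "strict_interval b n1 I1"
  shows "\<exists>n>N. \<exists>I. strict_interval b n I \<and>
    typeC_density b h C I1 * exp (- T n1) \<le> typeC_density b h C I"
proof -
  have b: "b > 1"
    using happy by (simp add: gen_happy_digits_def)
  have "0 < digit_mean b h" "0 < digit_sd b h"
    using digit_mean_pos[OF happy] digit_sd_pos[OF happy] .
  then have T_nonneg: "0 \<le> T n" for n
    unfolding T_def \<mu>_def \<sigma>_def using geom_tail_nonneg[OF b _ \<open>0 < n1\<close>] by simp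
  have step: "\<exists>m' I. m < m' \<and> (n1 \<le> m' \<and> strict_interval b m' I) \<and>
      typeC_density b h C J * exp (T m' - T m) \<le> typeC_density b h C I"
    if "n1 \<le> m \<and> strict_interval b m J" for m J
    using density_step_with_tails[OF happy \<open>0 < n1\<close> _ adm[unfolded \<mu>_def \<sigma>_def], of m J C] that
    unfolding T_def \<mu>_def \<sigma>_def by blast
  obtain n I where "n > N" "strict_interval b n I"
    and dens: "typeC_density b h C I1 * exp (T n - T n1) \<le> typeC_density b h C I"
    using iterate_with_potential[where D = "typeC_density b h C", OF step, of n1 I1 N]
      I1 typeC_density_nonneg by blast
  moreover have "typeC_density b h C I1 * exp (- T n1) \<le> typeC_density b h C I1 * exp (T n - T n1)"
    using T_nonneg[of n] by (intro mult_left_mono typeC_density_nonneg) simp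
  ultimately show ?thesis
    by (meson order_trans)
qed

theorem theorem3p5:
  fixes b n1 :: nat and h :: "nat \<Rightarrow> nat" and C I1 :: "nat set"
  defines "\<mu> \<equiv> digit_mean b h" and "\<sigma> \<equiv> digit_sd b h"
  assumes happy: "gen_happy_digits b h"
    and n1_pos: "n1 > 0"
    and B1: "4 * (1 + 3 * \<mu> + sqrt 2 * \<sigma> * real b powr (5 * real n1 / 8)) \<le> real b ^ (n1 - 1)"
    and B2: "sqrt (3 * \<mu> * real b) * \<sigma> \<le> real b powr (3 * real n1 / 8)"
    and B3: "4 * \<mu> * (3 * \<mu> + 1 + real b powr (3 * real n1 / 4)
                 + 2 * \<sigma> * (1 / sqrt \<mu>) * real b powr (5 * real n1 / 8)) \<le> real b ^ (n1 - 1)"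
    and I1: "strict_interval b n1 I1"
  shows "\<forall>N::nat. \<exists>n>N. \<exists>I. strict_interval b n I \<and>
           typeC_density b h C I \<ge> typeC_density b h C I1 *
             exp (- 2 / (real b powr (real n1 / 4) - 1)
                  - 4 * \<sigma> / (sqrt \<mu> * (real b powr (real n1 / 8) - 1)))"
proof
  fix N
  let ?tail = "2 * geom_tail b 4 n1 n1 + 2 * (\<sigma> / sqrt \<mu>) * geom_tail b 8 n1 n1"
  have b: "b > 1"
    using happy by (simp add: gen_happy_digits_def)
  have "real b powr (real n1 / 8) > 1"
    using b n1_pos by (intro gr_one_powr) auto
  then have "0 \<le> \<sigma> / (sqrt \<mu> * (real b powr (real n1 / 8) - 1))"
    using digit_sd_pos[OF happy] digit_mean_pos[OF happy] by (simp add: \<mu>_def \<sigma>_def)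
  moreover have "?tail = 2 / (real b powr (real n1 / 4) - 1)
      + 2 * (\<sigma> / (sqrt \<mu> * (real b powr (real n1 / 8) - 1)))"
    using geom_tail_start[OF b _ n1_pos] by simp
  ultimately have "- 2 / (real b powr (real n1 / 4) - 1)
      - 4 * \<sigma> / (sqrt \<mu> * (real b powr (real n1 / 8) - 1)) \<le> - ?tail"
    using minus_divide_left[of 2 "real b powr (real n1 / 4) - 1"] by simp
  moreover have "admissible b \<mu> \<sigma> n1"
    using B1 B3 by (simp add: admissible_def)
  then obtain n I where "n > N" "strict_interval b n I"
    "typeC_density b h C I1 * exp (- ?tail) \<le> typeC_density b h C I"
    using density_iteration[OF happy n1_pos _ I1, of N C] unfolding \<mu>_def \<sigma>_def by blast
  ultimately show "\<exists>n>N. \<exists>I. strict_interval b n I \<and> typeC_density b h C I \<ge> typeC_density b h C I1 *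
      exp (- 2 / (real b powr (real n1 / 4) - 1) - 4 * \<sigma> / (sqrt \<mu> * (real b powr (real n1 / 8) - 1)))"
    using typeC_density_nonneg[of b h C I1]
    by (meson exp_le_cancel_iff mult_left_mono order_trans)
qed

end
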